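(* Let $(m,n)$ be coprime positive integers, $\gamma\in D_{m,n}$, and let $\gamma^*\in D_{m+n,n}$ be obtained by inserting one horizontal unit step immediately after each vertical step of $\gamma$. Then $|O(\gamma^* )|=|O(\gamma)|+\frac{n(n-1)}{2}$ and $\mathrm{area}(\gamma)=\mathrm{area}(\gamma^* )$.
   Context: For coprime positive $(m,n)$, an $(m,n)$-Dyck path is a lattice path from $(0,0)$ to $(m,n)$ of $m$ horizontal unit steps and $n$ vertical unit steps lying weakly above $y=(n/m)x$; $D_{m,n}$ is the set of them. $\mathrm{area}(\gamma)$ is the number of complete unit lattice squares between $\gamma$ and its diagonal ($y=(n/m)x$ for $\gamma\in D_{m,n}$, $y=(n/(m+n))x$ for $\gamma^*\in D_{m+n,n}$). $O(\gamma)$ is the set of pairs $(r_h,r_v)$ with $r_h$ a horizontal step and $r_v$ a vertical step of $\gamma$, $r_v$ appearing after $r_h$. *)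

theory Defs
  imports Main
begin

datatype step = H | V

definition cntH :: "step list \<Rightarrow> nat" where
  "cntH p = length (filter (\<lambda>s. s = H) p)"

definition cntV :: "step list \<Rightarrow> nat" where
  "cntV p = length (filter (\<lambda>s. s = V) p)"

text \<open>(m,n)-Dyck paths: m horizontal and n vertical unit steps from (0,0), every lattice
  point (a,b) visited satisfies b \<ge> (n/m) a, i.e. b*m \<ge> n*a (checking vertices suffices
  since the path is piecewise linear and the half-plane is convex).\<close>
definition dyck :: "nat \<Rightarrow> nat \<Rightarrow> step list set" where
  "dyck m n = {p. cntH p = m \<and> cntV p = n \<and>
     (\<forall>k\<le>length p. n * cntH (take k p) \<le> m * cntV (take k p))}"

text \<open>Area w.r.t. diagonal y=(n/m)x: unit squares [i,i+1]x[j,j+1] lying below the path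
  (the horizontal step over column i is at height h > j) and above the diagonal
  (lower-right corner (i+1,j) weakly above: n*(i+1) \<le> m*j).\<close>
definition area :: "nat \<Rightarrow> nat \<Rightarrow> step list \<Rightarrow> nat" where
  "area m n p = card {(i, j). \<exists>k<length p. p ! k = H \<and> i = cntH (take k p)
       \<and> j < cntV (take k p) \<and> n * (i + 1) \<le> m * j}"

definition O_pairs :: "step list \<Rightarrow> (nat \<times> nat) set" where
  "O_pairs p = {(a, b). a < b \<and> b < length p \<and> p ! a = H \<and> p ! b = V}"

definition star :: "step list \<Rightarrow> step list" where
  "star p = concat (map (\<lambda>s. if s = V then [V, H] else [s]) p)"

end

theory Submission
  imports Defs
begin

text \<open>Inserting a horizontal step after each vertical step puts \<open>k\<close> new horizontal steps in
  front of the \<open>k\<close>-th vertical step (counting from \<open>0\<close>), each of which forms a new pair with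
  it; this gives \<open>0 + 1 + \<dots> + (n - 1)\<close> new pairs. For the area, the shear
  \<open>(x, y) \<mapsto> (x + y, y)\<close> maps \<open>\<gamma>\<close> onto \<open>\<gamma>\<^sup>*\<close> and the diagonal \<open>y = n x / m\<close> onto
  \<open>y = n x / (m + n)\<close>, so it is a bijection between the cells counted by the two areas.
  Neither argument uses the Dyck condition or coprimality.\<close>

lemma cntH_simps [simp]: "cntH [] = 0" "cntH (H # p) = Suc (cntH p)" "cntH (V # p) = cntH p"
  by (auto simp: cntH_def)

lemma cntV_simps [simp]: "cntV [] = 0" "cntV (V # p) = Suc (cntV p)" "cntV (H # p) = cntV p"
  by (auto simp: cntV_def)

lemma star_simps [simp]: "star [] = []" "star (H # p) = H # star p" "star (V # p) = V # H # star p"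
  by (auto simp: star_def)

lemma cntV_star [simp]: "cntV (star p) = cntV p"
proof (induction p)
  case (Cons x p)
  then show ?case by (cases x) auto
qed simp

lemma cntH_star [simp]: "cntH (star p) = cntH p + cntV p"
proof (induction p)
  case (Cons x p)
  then show ?case by (cases x) auto
qed simp

lemma finite_O_pairs: "finite (O_pairs p)"
  by (rule finite_subset[of _ "{..<length p} \<times> {..<length p}"]) (auto simp: O_pairs_def)

lemma card_O_pairs_Cons:
  "card (O_pairs (x # p)) = (if x = H then cntV p else 0) + card (O_pairs p)"
proof -
  let ?new = "if x = H then (\<lambda>b. (0 :: nat, Suc b)) ` {b. b < length p \<and> p ! b = V} else {}"
  let ?shift = "\<lambda>(a, b). (Suc a, Suc b)"
  have decomp: "O_pairs (x # p) = ?new \<union> ?shift ` O_pairs p"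
  proof (rule set_eqI, clarify)
    fix a b
    show "(a, b) \<in> O_pairs (x # p) \<longleftrightarrow> (a, b) \<in> ?new \<union> ?shift ` O_pairs p"
      by (cases a; cases b; cases x) (auto simp: O_pairs_def image_iff)
  qed
  have card_new: "card ?new = (if x = H then cntV p else 0)"
    by (auto simp: card_image inj_on_def cntV_def length_filter_conv_card)
  have "inj_on ?shift (O_pairs p)"
    by (auto simp: inj_on_def)
  then have "card (?shift ` O_pairs p) = card (O_pairs p)"
    by (rule card_image)
  moreover have "card (O_pairs (x # p)) = card ?new + card (?shift ` O_pairs p)"
    unfolding decomp by (rule card_Un_disjoint) (auto simp: finite_O_pairs)
  ultimately show ?thesis
    using card_new by simp
qed

lemma card_O_pairs_star:
  "2 * card (O_pairs (star p)) = 2 * card (O_pairs p) + cntV p * (cntV p - 1)"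
proof (induction p)
  case (Cons x p)
  then show ?case
    by (cases x; cases "cntV p") (auto simp: card_O_pairs_Cons algebra_simps)
qed simp

text \<open>The \<open>x\<close>-coordinate of the \<open>j\<close>-th vertical step, counting from \<open>0\<close>.\<close>
fun vstep_column :: "step list \<Rightarrow> nat \<Rightarrow> nat" where
  "vstep_column [] j = 0"
| "vstep_column (H # p) j = Suc (vstep_column p j)"
| "vstep_column (V # p) 0 = 0"
| "vstep_column (V # p) (Suc j) = vstep_column p j"

lemma vstep_column_star: "j < cntV p \<Longrightarrow> vstep_column (star p) j = vstep_column p j + j"
proof (induction p arbitrary: j)
  case (Cons x p)
  then show ?case by (cases x; cases j) auto
qed simp

definition cells_below :: "step list \<Rightarrow> (nat \<times> nat) set" where
  "cells_below p = {(i, j). \<exists>k<length p. p ! k = H \<and> i = cntH (take k p) \<and> j < cntV (take k p)}"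

lemma area_eq_card_cells_below:
  "area m n p = card {(i, j) \<in> cells_below p. n * (i + 1) \<le> m * j}"
  unfolding area_def cells_below_def by (rule arg_cong[where f = card]) auto

lemma ex_H_step_at_column: "(\<exists>k<length p. p ! k = H \<and> i = cntH (take k p)) \<longleftrightarrow> i < cntH p"
proof (induction p arbitrary: i)
  case (Cons x p)
  show ?case
  proof (cases x)
    case H
    then show ?thesis using Cons.IH by (cases i) (simp_all add: Ex_less_Suc2)
  next
    case V
    then show ?thesis using Cons.IH[of i] by (simp add: Ex_less_Suc2)
  qed
qed simp

lemma mem_cells_below_iff:
  "(i, j) \<in> cells_below p \<longleftrightarrow> i < cntH p \<and> j < cntV p \<and> vstep_column p j \<le> i"
proof (induction p arbitrary: i j)
  case (Cons x p)
  then have IH: "(\<exists>k<length p. p ! k = H \<and> i = cntH (take k p) \<and> j < cntV (take k p))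
      \<longleftrightarrow> i < cntH p \<and> j < cntV p \<and> vstep_column p j \<le> i" for i j
    by (simp add: cells_below_def)
  show ?case
  proof (cases x)
    case H
    then show ?thesis using IH by (cases i) (auto simp: cells_below_def Ex_less_Suc2)
  next
    case V
    then show ?thesis using IH ex_H_step_at_column
      by (cases j) (auto simp: cells_below_def Ex_less_Suc2)
  qed
qed (simp add: cells_below_def)

lemma below_diagonal_column_bound:
  fixes i j m n :: nat
  assumes "n * (i + 1) \<le> m * j" "j < n"
  shows "i < m"
proof (rule ccontr)
  assume "\<not> i < m"
  then have "m * j \<le> i * n"
    using assms(2) by (intro mult_le_mono) auto
  also have "\<dots> < n * (i + 1)"
    using assms(2) by simp
  finally show False
    using assms(1) by simp
qed

lemma area_star:
  assumes "cntH p = m" "cntV p = n"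
  shows "area m n p = area (m + n) n (star p)"
proof -
  let ?A = "{(i, j) \<in> cells_below p. n * (i + 1) \<le> m * j}"
  let ?shear = "\<lambda>(i :: nat, j :: nat). (i + j, j)"
  have "{(x, j) \<in> cells_below (star p). n * (x + 1) \<le> (m + n) * j} = ?shear ` ?A"
  proof (rule set_eqI, clarify)
    fix x j
    show "(x, j) \<in> {(x, j) \<in> cells_below (star p). n * (x + 1) \<le> (m + n) * j}
      \<longleftrightarrow> (x, j) \<in> ?shear ` ?A"
    proof
      assume "(x, j) \<in> {(x, j) \<in> cells_below (star p). n * (x + 1) \<le> (m + n) * j}"
      then have j: "j < n" and col: "vstep_column p j + j \<le> x"
        and diag: "n * (x + 1) \<le> (m + n) * j"
        using assms by (auto simp: mem_cells_below_iff vstep_column_star)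
      define i where "i = x - j"
      have x: "x = i + j"
        using col i_def by simp
      have "n * (i + 1) \<le> m * j"
        using diag unfolding x by (simp add: algebra_simps)
      \<comment> \<open>cells of \<open>star p\<close> with \<open>i \<ge> m\<close> have no preimage, but lie below the diagonal\<close>
      moreover from this j have "i < m"
        by (rule below_diagonal_column_bound)
      ultimately have "(i, j) \<in> ?A"
        using assms j col x by (auto simp: mem_cells_below_iff)
      then show "(x, j) \<in> ?shear ` ?A"
        using x by force
    next
      assume "(x, j) \<in> ?shear ` ?A"
      then show "(x, j) \<in> {(x, j) \<in> cells_below (star p). n * (x + 1) \<le> (m + n) * j}"
        using assms by (auto simp: mem_cells_below_iff vstep_column_star algebra_simps)
    qed
  qed
  moreover have "inj_on ?shear ?A"
    by (auto simp: inj_on_def)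
  ultimately show ?thesis
    by (simp add: area_eq_card_cells_below card_image)
qed

theorem mainTheorem6:
  fixes m n :: nat and \<gamma> :: "step list"
  assumes "0 < m" "0 < n" "coprime m n" "\<gamma> \<in> dyck m n"
  shows "card (O_pairs (star \<gamma>)) = card (O_pairs \<gamma>) + n * (n - 1) div 2
         \<and> area m n \<gamma> = area (m + n) n (star \<gamma>)"
proof
  have counts: "cntH \<gamma> = m" "cntV \<gamma> = n"
    using assms(4) by (auto simp: dyck_def)
  show "card (O_pairs (star \<gamma>)) = card (O_pairs \<gamma>) + n * (n - 1) div 2"
    using card_O_pairs_star[of \<gamma>] counts by simp
  show "area m n \<gamma> = area (m + n) n (star \<gamma>)"
    using area_star[OF counts] .
qed

end
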